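(* Let $G=(V,E)$ be a connected $(n,d,\lambda)$ graph. Let $v_1,\dots,v_{t-1}$ ($t\ge2$) be vertices of $G$, let $B=\bigcup_{i=1}^{t-1}N[v_i]$ and $W=V\setminus B$, and suppose $|W|>\frac{\lambda}{d+\lambda}n$. Then there exists a vertex $u\in B$ such that \[ 1\le |N(u)\cap W|\le (d+\lambda)\frac{|W|}{n}+\lambda . \]
   Context: An $(n,d,\lambda)$ graph is an $n$-vertex $d$-regular graph whose adjacency matrix eigenvalues $\lambda_1\ge\dots\ge\lambda_n$ satisfy $|\lambda_i|\le\lambda$ for all $2\le i\le n$, where $\lambda\ge 0$. $N(v)$ is the set of neighbours of $v$ and $N[v]=N(v)\cup\{v\}$. (In the paper, $|N(u)\cap W|$ is called the type of $u$, and the sets arise as the black/white sets during a greedy construction of a Z-sequence.) *)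

theory Defs
  imports "Jordan_Normal_Form.Char_Poly"
begin

definition simple_graph :: "nat \<Rightarrow> (nat \<Rightarrow> nat \<Rightarrow> bool) \<Rightarrow> bool" where
  "simple_graph n E \<longleftrightarrow> (\<forall>u v. E u v \<longrightarrow> u < n \<and> v < n \<and> u \<noteq> v \<and> E v u)"

definition nbhd :: "nat \<Rightarrow> (nat \<Rightarrow> nat \<Rightarrow> bool) \<Rightarrow> nat \<Rightarrow> nat set" where
  "nbhd n E v = {u. u < n \<and> E v u}"

definition cl_nbhd :: "nat \<Rightarrow> (nat \<Rightarrow> nat \<Rightarrow> bool) \<Rightarrow> nat \<Rightarrow> nat set" where
  "cl_nbhd n E v = insert v (nbhd n E v)"

definition regular :: "nat \<Rightarrow> (nat \<Rightarrow> nat \<Rightarrow> bool) \<Rightarrow> nat \<Rightarrow> bool" where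
  "regular n E d \<longleftrightarrow> (\<forall>v<n. card (nbhd n E v) = d)"

definition connected_graph :: "nat \<Rightarrow> (nat \<Rightarrow> nat \<Rightarrow> bool) \<Rightarrow> bool" where
  "connected_graph n E \<longleftrightarrow> (\<forall>u<n. \<forall>v<n. (u, v) \<in> {(x, y). E x y}\<^sup>*)"

definition adj_mat :: "nat \<Rightarrow> (nat \<Rightarrow> nat \<Rightarrow> bool) \<Rightarrow> real mat" where
  "adj_mat n E = mat n n (\<lambda>(i, j). if E i j then 1 else 0)"

(* eigenvalues (with multiplicity) sorted decreasingly: lambda_1 >= ... >= lambda_n *)
definition adj_eigs :: "nat \<Rightarrow> (nat \<Rightarrow> nat \<Rightarrow> bool) \<Rightarrow> real list" where
  "adj_eigs n E = rev (sorted_list_of_multiset (proots (char_poly (adj_mat n E))))"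

definition ndl_graph :: "nat \<Rightarrow> (nat \<Rightarrow> nat \<Rightarrow> bool) \<Rightarrow> nat \<Rightarrow> real \<Rightarrow> bool" where
  "ndl_graph n E d lam \<longleftrightarrow> simple_graph n E \<and> regular n E d \<and> lam \<ge> 0 \<and>
     (\<forall>i. 1 \<le> i \<and> i < length (adj_eigs n E) \<longrightarrow> \<bar>adj_eigs n E ! i\<bar> \<le> lam)"

end

theory Submission
  imports Defs "Jordan_Normal_Form.Spectral_Radius"
begin

text \<open>
Let \<open>f\<close> be the indicator vector of \<open>W\<close>, \<open>A\<close> the adjacency matrix and \<open>g u = |N(u) \<inter> W|\<close>
the type of \<open>u\<close>. Then \<open>f \<bullet> A f = \<Sum>\<^sub>W g\<close> and \<open>|A f|\<^sup>2 = \<Sum>\<^sub>V g\<^sup>2\<close>. In an orthonormal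
eigenbasis of \<open>A\<close> the all-ones vector spans the eigenspace of \<open>d\<close> and all other eigenvalues lie in
\<open>[-\<lambda>, \<lambda>]\<close>, which bounds \<open>\<Sum>\<^sub>W g\<close> from below and \<open>\<Sum>\<^sub>V g\<^sup>2\<close> from above in terms of
\<open>|W|/n\<close>. On the other hand, double counting gives \<open>\<Sum>\<^sub>B g = d |W| - \<Sum>\<^sub>W g\<close>, Cauchy-Schwarz gives
\<open>\<Sum>\<^sub>W g\<^sup>2 \<ge> (\<Sum>\<^sub>W g)\<^sup>2 / |W|\<close>, and if every vertex of \<open>B\<close> of positive type had type above
\<open>k = (d + \<lambda>) |W| / n + \<lambda>\<close>, then \<open>\<Sum>\<^sub>B g\<^sup>2 > k \<Sum>\<^sub>B g\<close>, strictly because connectivity provides an edge from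
\<open>B\<close> to \<open>W\<close>. For \<open>|W| > \<lambda> n / (d + \<lambda>)\<close> these inequalities are incompatible.
\<close>

section \<open>Orthogonal diagonalisation of real symmetric matrices\<close>

lemma symmetric_matD:
  assumes "transpose_mat A = A" "A \<in> carrier_mat n n" "i < n" "j < n"
  shows "A $$ (i, j) = A $$ (j, i)"
  by (metis assms carrier_matD index_transpose_mat(1))

lemma index_mult_mat_sum:
  assumes "A \<in> carrier_mat nr n" "B \<in> carrier_mat n nc" "i < nr" "j < nc"
  shows "(A * B) $$ (i, j) = (\<Sum>k<n. A $$ (i, k) * B $$ (k, j))"
  using assms by (simp add: scalar_prod_def lessThan_atLeast0)

lemma scalar_prod_sum: "a \<in> carrier_vec n \<Longrightarrow> b \<in> carrier_vec n \<Longrightarrow> a \<bullet> b = (\<Sum>i<n. a $ i * b $ i)"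
  by (simp add: scalar_prod_def lessThan_atLeast0)

lemma real_symmetric_complex_eigenvalue_real:
  fixes A :: "real mat"
  assumes A: "A \<in> carrier_mat n n" and sym: "transpose_mat A = A"
    and v: "v \<in> carrier_vec n" "v \<noteq> 0\<^sub>v n"
    and ev: "map_mat complex_of_real A *\<^sub>v v = z \<cdot>\<^sub>v v"
  shows "z \<in> \<real>"
proof -
  define S where "S = (\<Sum>i<n. \<Sum>j<n. cnj (v$i) * of_real (A$$(i,j)) * v$j)"
  define r where "r = (\<Sum>i<n. (cmod (v$i))\<^sup>2)"
  have row: "(\<Sum>j<n. of_real (A$$(i,j)) * v$j) = z * v$i" if "i < n" for i
    using arg_cong[OF ev, of "\<lambda>w. w $ i"] that A v(1)
    by (simp add: scalar_prod_def row_def lessThan_atLeast0)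
  have "S = (\<Sum>i<n. z * (cnj (v$i) * v$i))"
    unfolding S_def by (simp add: row mult.assoc mult.left_commute flip: sum_distrib_left)
  also have "\<dots> = z * of_real r"
    unfolding r_def of_real_sum sum_distrib_left
    by (intro sum.cong refl) (simp only: complex_norm_square mult.commute)
  finally have Sz: "S = z * of_real r" .
  have "cnj S = (\<Sum>i<n. \<Sum>j<n. v$i * of_real (A$$(i,j)) * cnj (v$j))"
    unfolding S_def cnj_sum by simp
  also have "\<dots> = (\<Sum>j<n. \<Sum>i<n. v$i * of_real (A$$(i,j)) * cnj (v$j))"
    by (rule sum.swap)
  also have "\<dots> = S"
    unfolding S_def using symmetric_matD[OF sym A] by (intro sum.cong refl) (auto simp: mult_ac)
  finally have "cnj S = S" .
  obtain i where "i < n" "v $ i \<noteq> 0" using v by (metis eq_vecI carrier_vecD index_zero_vec)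
  then have "0 < r" unfolding r_def by (intro sum_pos2[of "{..<n}" i]) auto
  moreover have "cnj z * of_real r = z * of_real r" using Sz \<open>cnj S = S\<close>
    by (metis complex_cnj_complex_of_real complex_cnj_mult)
  ultimately have "cnj z = z" by simp
  then show ?thesis by (simp add: Reals_cnj_iff)
qed

lemma real_symmetric_has_eigenvector:
  fixes A :: "real mat"
  assumes A: "A \<in> carrier_mat n n" and "0 < n" and sym: "transpose_mat A = A"
  shows "\<exists>e v. v \<in> carrier_vec n \<and> v \<noteq> 0\<^sub>v n \<and> A *\<^sub>v v = e \<cdot>\<^sub>v v"
proof -
  let ?Ac = "map_mat complex_of_real A"
  have Ac: "?Ac \<in> carrier_mat n n" using A by auto
  obtain z where ez: "eigenvalue ?Ac z"
    using spectrum_non_empty[OF Ac \<open>0 < n\<close>] unfolding spectrum_def by auto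
  then obtain v where "v \<in> carrier_vec n" "v \<noteq> 0\<^sub>v n" "?Ac *\<^sub>v v = z \<cdot>\<^sub>v v"
    unfolding eigenvalue_def eigenvector_def using Ac by auto
  then have z: "z = of_real (Re z)"
    using real_symmetric_complex_eigenvalue_real[OF A sym] by (simp add: Reals_cnj_iff complex_eq_iff)
  have "poly (char_poly ?Ac) z = 0" using ez eigenvalue_root_char_poly[OF Ac] by simp
  then have "poly (map_poly complex_of_real (char_poly A)) (of_real (Re z)) = 0"
    unfolding of_real_hom.char_poly_hom[OF A] by (simp flip: z)
  then have "eigenvalue A (Re z)"
    using eigenvalue_root_char_poly[OF A] by (simp add: of_real_hom.poly_map_poly)
  then show ?thesis unfolding eigenvalue_def eigenvector_def using A by auto
qed

definition householder_mat :: "nat \<Rightarrow> (nat \<Rightarrow> real) \<Rightarrow> real mat" where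
  "householder_mat n w = mat n n (\<lambda>(i, j). (if i = j then 1 else 0) - 2 / (\<Sum>k<n. (w k)\<^sup>2) * w i * w j)"

lemma householder_mat_carrier [simp]: "householder_mat n w \<in> carrier_mat n n"
  and dim_householder_mat [simp]: "dim_row (householder_mat n w) = n" "dim_col (householder_mat n w) = n"
  unfolding householder_mat_def by simp_all

lemma index_householder_mat:
  "i < n \<Longrightarrow> j < n \<Longrightarrow>
    householder_mat n w $$ (i, j) = (if i = j then 1 else 0) - 2 / (\<Sum>k<n. (w k)\<^sup>2) * w i * w j"
  unfolding householder_mat_def by simp

lemma transpose_householder_mat: "transpose_mat (householder_mat n w) = householder_mat n w"
  by (intro eq_matI) (auto simp: index_householder_mat mult_ac)

text \<open>For \<open>w = 0\<close> the coefficient \<open>2 / 0\<close> is \<open>0\<close>, so the involution property needs no case split.\<close>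

lemma householder_mat_involution: "householder_mat n w * householder_mat n w = 1\<^sub>m n"
proof (rule eq_matI)
  define H where "H = householder_mat n w"
  define s where "s = (\<Sum>k<n. (w k)\<^sup>2)"
  define c where "c = 2 / s"
  have H: "H \<in> carrier_mat n n" unfolding H_def by simp
  have Hij: "H $$ (i, j) = (if i = j then 1 else 0) - c * w i * w j" if "i < n" "j < n" for i j
    using that unfolding H_def c_def s_def by (simp add: index_householder_mat)
  have cs: "c * (c * s - 2) = 0" unfolding c_def by (cases "s = 0") (simp_all add: field_simps)
  have wH: "(\<Sum>k<n. w k * H $$ (k, j)) = (1 - c * s) * w j" if "j < n" for j
    using that unfolding s_def
    by (simp add: Hij algebra_simps sum_subtractf sum_distrib_left sum_distrib_right power2_eq_square
        if_distrib[of "\<lambda>x. _ * x"] cong: if_cong)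
  fix i j assume "i < dim_row (1\<^sub>m n :: real mat)" "j < dim_col (1\<^sub>m n :: real mat)"
  then have ij: "i < n" "j < n" by auto
  have "(H * H) $$ (i, j) = (\<Sum>k<n. ((if i = k then 1 else 0) - c * w i * w k) * H $$ (k, j))"
    using ij by (simp add: index_mult_mat_sum[OF H H] Hij)
  also have "\<dots> = (\<Sum>k<n. (if i = k then 1 else 0) * H $$ (k, j)) - c * w i * (\<Sum>k<n. w k * H $$ (k, j))"
    by (simp add: left_diff_distrib sum_subtractf sum_distrib_left mult.assoc)
  also have "\<dots> = H $$ (i, j) - c * w i * (1 - c * s) * w j"
    using ij wH[of j] by (simp add: if_distrib[of "\<lambda>x. x * _"] cong: if_cong)
  also have "\<dots> = 1\<^sub>m n $$ (i, j)"
    using ij cs by (auto simp: Hij algebra_simps)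
  finally show "(householder_mat n w * householder_mat n w) $$ (i, j) = 1\<^sub>m n $$ (i, j)"
    unfolding H_def .
qed auto

lemma householder_mat_col_0:
  fixes u :: "real vec"
  assumes u: "u \<in> carrier_vec n" and "0 < n" and unit: "u \<bullet> u = 1"
  shows "col (householder_mat n (\<lambda>i. u $ i - (if i = 0 then 1 else 0))) 0 = u"
proof (rule eq_vecI)
  define w where "w i = u $ i - (if i = 0 then 1 else 0)" for i
  define s where "s = (\<Sum>k<n. (w k)\<^sup>2)"
  have "s = (\<Sum>k<n. (u $ k)\<^sup>2) - 2 * u $ 0 + 1"
    unfolding s_def w_def using \<open>0 < n\<close>
    by (simp add: power2_diff sum.distrib sum_subtractf if_distrib[of "\<lambda>x. _ * x"]
        if_distrib[of "\<lambda>x. x\<^sup>2"] cong: if_cong)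
  also have "(\<Sum>k<n. (u $ k)\<^sup>2) = 1"
    using unit u by (simp add: scalar_prod_def lessThan_atLeast0 power2_eq_square)
  finally have s: "s = - 2 * w 0" unfolding w_def by simp
  fix i assume "i < dim_vec u"
  then have i: "i < n" using u by simp
  have "col (householder_mat n w) 0 $ i = (if i = 0 then 1 else 0) - 2 / s * w i * w 0"
    using i \<open>0 < n\<close> by (simp add: index_householder_mat s_def)
  also have "\<dots> = u $ i"
  proof (cases "s = 0")
    case True
    then have "w i = 0" using i unfolding s_def by (simp add: sum_nonneg_eq_0_iff)
    then show ?thesis using True by (simp add: w_def split: if_splits)
  next
    case False
    then have "2 / s * w 0 = -1" using s by (simp add: field_simps)
    then have "2 / s * w i * w 0 = - w i" by (metis mult.assoc mult.commute mult_minus1)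
    then show ?thesis by (simp add: w_def)
  qed
  finally show "col (householder_mat n (\<lambda>i. u $ i - (if i = 0 then 1 else 0))) 0 $ i = u $ i"
    unfolding w_def .
qed (use u in simp)

lemma symmetric_mat_first_column_block:
  fixes M :: "'a :: field mat"
  assumes M: "M \<in> carrier_mat (Suc m) (Suc m)" and MT: "transpose_mat M = M"
    and M0: "col M 0 = e \<cdot>\<^sub>v unit_vec (Suc m) 0"
  defines "A' \<equiv> mat m m (\<lambda>(i, j). M $$ (Suc i, Suc j))"
  shows "M = four_block_mat (mat_diag 1 (\<lambda>_. e)) (0\<^sub>m 1 m) (0\<^sub>m m 1) A'"
    and "transpose_mat A' = A'"
proof -
  have Mi0: "M $$ (i, 0) = (if i = 0 then e else 0)" if "i < Suc m" for i
    using arg_cong[OF M0, of "\<lambda>x. x $ i"] that M by simp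
  show "M = four_block_mat (mat_diag 1 (\<lambda>_. e)) (0\<^sub>m 1 m) (0\<^sub>m m 1) A'"
  proof (rule eq_matI)
    fix i j assume "i < dim_row (four_block_mat (mat_diag 1 (\<lambda>_. e)) (0\<^sub>m 1 m) (0\<^sub>m m 1) A')"
      "j < dim_col (four_block_mat (mat_diag 1 (\<lambda>_. e)) (0\<^sub>m 1 m) (0\<^sub>m m 1) A')"
    then show "M $$ (i, j) = four_block_mat (mat_diag 1 (\<lambda>_. e)) (0\<^sub>m 1 m) (0\<^sub>m m 1) A' $$ (i, j)"
      using Mi0 Mi0[of j] symmetric_matD[OF MT M, of 0 j]
      by (cases i; cases j) (auto simp: A'_def mat_diag_def)
  qed (use M A'_def in \<open>auto simp: mat_diag_def\<close>)
  show "transpose_mat A' = A'"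
    unfolding A'_def using symmetric_matD[OF MT M] by (intro eq_matI) auto
qed

lemma symmetric_orthogonal_deflation:
  fixes A :: "real mat"
  assumes A: "A \<in> carrier_mat (Suc m) (Suc m)" and sym: "transpose_mat A = A"
  obtains H e A' where "H \<in> carrier_mat (Suc m) (Suc m)" "transpose_mat H = H" "H * H = 1\<^sub>m (Suc m)"
    and "A' \<in> carrier_mat m m" "transpose_mat A' = A'"
    and "H * A * H = four_block_mat (mat_diag 1 (\<lambda>_. e)) (0\<^sub>m 1 m) (0\<^sub>m m 1) A'"
proof -
  obtain e v where v: "v \<in> carrier_vec (Suc m)" "v \<noteq> 0\<^sub>v (Suc m)" "A *\<^sub>v v = e \<cdot>\<^sub>v v"
    using real_symmetric_has_eigenvector[OF A _ sym] by auto
  have "0 < v \<bullet> v" using conjugate_square_greater_0_vec[OF v(1)] v(2) by simp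
  define u where "u = (1 / sqrt (v \<bullet> v)) \<cdot>\<^sub>v v"
  have u: "u \<in> carrier_vec (Suc m)" unfolding u_def using v by simp
  have "u \<bullet> u = 1"
    unfolding u_def using v(1) \<open>0 < v \<bullet> v\<close> by (simp add: power2_eq_square flip: real_sqrt_mult)
  define H where "H = householder_mat (Suc m) (\<lambda>i. u $ i - (if i = 0 then 1 else 0))"
  have H: "H \<in> carrier_mat (Suc m) (Suc m)" and HT: "transpose_mat H = H"
    and HH: "H * H = 1\<^sub>m (Suc m)" and Hu: "col H 0 = u"
    unfolding H_def using householder_mat_col_0[OF u] \<open>u \<bullet> u = 1\<close>
    by (simp_all add: transpose_householder_mat householder_mat_involution)
  have Au: "A *\<^sub>v u = e \<cdot>\<^sub>v u" unfolding u_def using v A by (simp add: mult_mat_vec smult_smult_assoc mult.commute)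
  text \<open>\<open>H\<close> swaps \<open>u\<close> and the first unit vector, so \<open>H A H\<close> has the first unit vector as eigenvector.\<close>
  define M where "M = H * A * H"
  have M: "M \<in> carrier_mat (Suc m) (Suc m)" unfolding M_def using H A by simp
  have "transpose_mat M = transpose_mat H * transpose_mat (H * A)"
    unfolding M_def by (rule transpose_mult) (use H A in auto)
  also have "transpose_mat (H * A) = transpose_mat A * transpose_mat H" by (rule transpose_mult[OF H A])
  also have "transpose_mat H * (transpose_mat A * transpose_mat H) = M"
    unfolding M_def HT sym using assoc_mult_mat[OF H A H] by simp
  finally have MT: "transpose_mat M = M" .
  have "col M 0 = H *\<^sub>v (A *\<^sub>v u)"
    unfolding M_def using col_mult2[OF mult_carrier_mat[OF H A] H, of 0] assoc_mult_mat_vec[OF H A u] Hu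
    by simp
  also have "\<dots> = e \<cdot>\<^sub>v (H *\<^sub>v col H 0)" unfolding Au Hu using H u by (simp add: mult_mat_vec)
  also have "H *\<^sub>v col H 0 = col (H * H) 0" using col_mult2[OF H H, of 0] by simp
  finally have M0: "col M 0 = e \<cdot>\<^sub>v unit_vec (Suc m) 0" using HH by simp
  show ?thesis
    using that[OF H HT HH _ symmetric_mat_first_column_block(2)[OF M MT M0]]
      symmetric_mat_first_column_block(1)[OF M MT M0] unfolding M_def by simp
qed

lemma four_block_mat_diag:
  "four_block_mat (mat_diag 1 (\<lambda>_. e)) (0\<^sub>m 1 m) (0\<^sub>m m 1) (mat_diag m \<mu>)
     = mat_diag (Suc m) (\<lambda>i. if i = 0 then e else \<mu> (i - 1))"
  by (rule eq_matI) (auto simp: mat_diag_def)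

theorem real_symmetric_orthogonal_diagonalization:
  fixes A :: "real mat"
  assumes "A \<in> carrier_mat n n" "transpose_mat A = A"
  obtains U \<mu> where "U \<in> carrier_mat n n" "transpose_mat U * U = 1\<^sub>m n"
    "transpose_mat U * A * U = mat_diag n \<mu>"
  using assms
proof (induction n arbitrary: A thesis)
  case 0
  show ?case by (rule "0.prems"(1)[of "1\<^sub>m 0" "\<lambda>_. 0"]) (use "0.prems" in \<open>auto intro!: eq_matI simp: mat_diag_def\<close>)
next
  case (Suc m)
  obtain H e A' where H: "H \<in> carrier_mat (Suc m) (Suc m)" "transpose_mat H = H" "H * H = 1\<^sub>m (Suc m)"
    and A': "A' \<in> carrier_mat m m" "transpose_mat A' = A'"
    and HAH: "H * A * H = four_block_mat (mat_diag 1 (\<lambda>_. e)) (0\<^sub>m 1 m) (0\<^sub>m m 1) A'"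
    using symmetric_orthogonal_deflation[OF Suc.prems(2,3)] by blast
  obtain U' \<mu> where U': "U' \<in> carrier_mat m m" "transpose_mat U' * U' = 1\<^sub>m m"
    "transpose_mat U' * A' * U' = mat_diag m \<mu>"
    using Suc.IH[OF _ A'] by blast
  define F where "F = four_block_mat (1\<^sub>m 1) (0\<^sub>m 1 m) (0\<^sub>m m 1) U'"
  have F: "F \<in> carrier_mat (Suc m) (Suc m)" unfolding F_def using U' by auto
  have FT_blocks: "transpose_mat F = four_block_mat (1\<^sub>m 1) (0\<^sub>m 1 m) (0\<^sub>m m 1) (transpose_mat U')"
    unfolding F_def using transpose_four_block_mat[OF one_carrier_mat zero_carrier_mat zero_carrier_mat U'(1)]
    by simp
  have FT: "transpose_mat F \<in> carrier_mat (Suc m) (Suc m)" using F by simp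
  have HFT: "transpose_mat (H * F) = transpose_mat F * H"
    using transpose_mult[OF H(1) F] H(2) by simp
  have "transpose_mat (H * F) * (H * F) = transpose_mat F * (H * H * F)"
    unfolding HFT using assoc_mult_mat[OF FT H(1) mult_carrier_mat[OF H(1) F]] assoc_mult_mat[OF H(1) H(1) F]
    by simp
  also have "\<dots> = 1\<^sub>m (Suc m)"
    using H U' F unfolding FT_blocks unfolding F_def by (simp add: mult_four_block_mat[of _ 1 1 _ m _ m _ _ 1 _ m])
  finally have "transpose_mat (H * F) * (H * F) = 1\<^sub>m (Suc m)" .
  moreover have "transpose_mat (H * F) * A * (H * F) = transpose_mat F * (H * A * H) * F"
    unfolding HFT using FT H(1) F Suc.prems(2)
    by (simp add: assoc_mult_mat[of _ "Suc m" "Suc m" _ "Suc m" _ "Suc m"])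
  moreover have "\<dots> = mat_diag (Suc m) (\<lambda>i. if i = 0 then e else \<mu> (i - 1))"
    using U' A' four_block_mat_diag[of e m \<mu>] unfolding HAH FT_blocks unfolding F_def
    by (simp add: mult_four_block_mat[of _ 1 1 _ m _ m _ _ 1 _ m] assoc_mult_mat[of _ m m]
        left_mult_one_mat[OF mat_diag_dim] left_mult_zero_mat[OF mat_diag_dim]
        right_mult_one_mat[OF mat_diag_dim] right_mult_zero_mat[OF mat_diag_dim]
        right_add_zero_mat[OF mat_diag_dim] right_add_zero_mat[OF zero_carrier_mat])
  ultimately show ?case using Suc.prems(1) H F by (metis mult_carrier_mat)
qed

lemma orthogonal_mult_transpose:
  fixes U :: "'a :: field mat"
  assumes U: "U \<in> carrier_mat n n" and UU: "transpose_mat U * U = 1\<^sub>m n"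
  shows "U * transpose_mat U = 1\<^sub>m n"
  using mat_mult_left_right_inverse[of "transpose_mat U" n U] U UU by simp

lemma proots_prod_linear_factors: "proots (\<Prod>a\<leftarrow>xs. [:- a, 1:]) = mset (xs :: 'a :: idom list)"
proof (induction xs)
  case (Cons x xs)
  have "(\<Prod>a\<leftarrow>xs. [:- a, 1:]) \<noteq> 0" by (auto simp: prod_list_zero_iff)
  then have "proots ([:- x, 1:] * (\<Prod>a\<leftarrow>xs. [:- a, 1:])) = proots [:- x, 1:] + proots (\<Prod>a\<leftarrow>xs. [:- a, 1:])"
    by (intro proots_mult) simp_all
  also have "\<dots> = add_mset x (mset xs)" using Cons.IH proots_linear_factor[of "- x"] by simp
  finally show ?case by simp
qed simp

lemma orthogonal_diag_proots_char_poly: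
  fixes A U :: "'a :: field mat"
  assumes A: "A \<in> carrier_mat n n" and U: "U \<in> carrier_mat n n"
    and UU: "transpose_mat U * U = 1\<^sub>m n" and diag: "transpose_mat U * A * U = mat_diag n \<mu>"
  shows "proots (char_poly A) = mset (map \<mu> [0..<n])"
proof -
  have UUT: "U * transpose_mat U = 1\<^sub>m n" by (rule orthogonal_mult_transpose[OF U UU])
  have UT: "transpose_mat U \<in> carrier_mat n n" using U by simp
  have "similar_mat (mat_diag n \<mu>) A"
    unfolding similar_mat_def similar_mat_wit_def Let_def using A U UT UU UUT diag
    by (intro exI[of _ "transpose_mat U"] exI[of _ U]) (auto simp: carrier_matD[OF mat_diag_dim])
  then have "char_poly A = char_poly (mat_diag n \<mu>)" by (simp add: char_poly_similar)
  also have "\<dots> = (\<Prod>a\<leftarrow>diag_mat (mat_diag n \<mu>). [:- a, 1:])"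
    by (rule char_poly_upper_triangular[OF mat_diag_dim]) (simp add: upper_triangular_def mat_diag_def)
  also have "diag_mat (mat_diag n \<mu>) = map \<mu> [0..<n]"
    unfolding diag_mat_def mat_diag_def by (simp cong: map_cong)
  finally show ?thesis by (simp only: proots_prod_linear_factors)
qed

lemma orthogonal_diag_coordinates:
  fixes A U :: "'a :: field mat"
  assumes A: "A \<in> carrier_mat n n" and U: "U \<in> carrier_mat n n"
    and UU: "transpose_mat U * U = 1\<^sub>m n" and diag: "transpose_mat U * A * U = mat_diag n \<mu>"
    and x: "x \<in> carrier_vec n"
  shows "transpose_mat U *\<^sub>v (A *\<^sub>v x) = vec n (\<lambda>i. \<mu> i * (transpose_mat U *\<^sub>v x) $ i)"
proof -
  define z where "z = transpose_mat U *\<^sub>v x"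
  have UT: "transpose_mat U \<in> carrier_mat n n" using U by simp
  have z: "z \<in> carrier_vec n" unfolding z_def using UT x by simp
  have "transpose_mat U *\<^sub>v (A *\<^sub>v x) = transpose_mat U *\<^sub>v (A *\<^sub>v (U *\<^sub>v z))"
    unfolding z_def using assoc_mult_mat_vec[OF U UT x] orthogonal_mult_transpose[OF U UU] x by simp
  also have "\<dots> = mat_diag n \<mu> *\<^sub>v z"
    unfolding diag[symmetric] using UT A U z by (simp add: assoc_mult_mat_vec[of _ n n _ n])
  also have "\<dots> = vec n (\<lambda>i. \<mu> i * z $ i)"
    using z by (intro eq_vecI) (auto simp: mat_diag_def scalar_prod_def sum.remove[of _ i for i] if_distrib
      cong: if_cong)
  finally show ?thesis unfolding z_def .
qed

lemma orthogonal_scalar_prod: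
  fixes U :: "'a :: field mat"
  assumes U: "U \<in> carrier_mat n n" and UU: "transpose_mat U * U = 1\<^sub>m n"
    and x: "x \<in> carrier_vec n" and y: "y \<in> carrier_vec n"
  shows "(transpose_mat U *\<^sub>v x) \<bullet> (transpose_mat U *\<^sub>v y) = x \<bullet> y"
proof -
  have "(transpose_mat U *\<^sub>v x) \<bullet> (transpose_mat U *\<^sub>v y) = x \<bullet> (U *\<^sub>v (transpose_mat U *\<^sub>v y))"
    using transpose_vec_mult_scalar[OF U _ x] U y by simp
  also have "\<dots> = x \<bullet> y"
    using assoc_mult_mat_vec[OF U _ y, of "transpose_mat U"] orthogonal_mult_transpose[OF U UU] U y by simp
  finally show ?thesis .
qed

lemma orthogonal_diag_eigenvector_coordinates:
  fixes A U :: "'a :: field mat"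
  assumes A: "A \<in> carrier_mat n n" and U: "U \<in> carrier_mat n n"
    and UU: "transpose_mat U * U = 1\<^sub>m n" and diag: "transpose_mat U * A * U = mat_diag n \<mu>"
    and y: "y \<in> carrier_vec n" and ev: "A *\<^sub>v y = e \<cdot>\<^sub>v y"
    and i: "i < n" "\<mu> i \<noteq> e"
  shows "(transpose_mat U *\<^sub>v y) $ i = 0"
proof -
  have "\<mu> i * (transpose_mat U *\<^sub>v y) $ i = (transpose_mat U *\<^sub>v (A *\<^sub>v y)) $ i"
    using orthogonal_diag_coordinates[OF A U UU diag y] i by simp
  also have "\<dots> = e * (transpose_mat U *\<^sub>v y) $ i"
    unfolding ev using U y i by (simp add: mult_mat_vec)
  finally show ?thesis using i by simp
qed

lemma orthogonal_scalar_prod_single_coordinate: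
  fixes U :: "real mat"
  assumes U: "U \<in> carrier_mat n n" and UU: "transpose_mat U * U = 1\<^sub>m n"
    and x: "x \<in> carrier_vec n" and y: "y \<in> carrier_vec n"
    and single: "\<And>i. i < n \<Longrightarrow> i \<noteq> i0 \<Longrightarrow> (transpose_mat U *\<^sub>v y) $ i = 0" and "i0 < n"
  shows "x \<bullet> y = (transpose_mat U *\<^sub>v x) $ i0 * (transpose_mat U *\<^sub>v y) $ i0"
proof -
  have "x \<bullet> y = (transpose_mat U *\<^sub>v x) \<bullet> (transpose_mat U *\<^sub>v y)"
    using orthogonal_scalar_prod[OF U UU x y] by simp
  also have "\<dots> = (\<Sum>i<n. (transpose_mat U *\<^sub>v x) $ i * (transpose_mat U *\<^sub>v y) $ i)"
    by (rule scalar_prod_sum) (use U x y in simp_all)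
  also have "\<dots> = (\<Sum>i<n. if i = i0 then (transpose_mat U *\<^sub>v x) $ i0 * (transpose_mat U *\<^sub>v y) $ i0 else 0)"
    using single by (intro sum.cong) auto
  finally show ?thesis using \<open>i0 < n\<close> by simp
qed

lemma orthogonal_diag_quadratic_forms:
  fixes A U :: "real mat"
  assumes A: "A \<in> carrier_mat n n" and U: "U \<in> carrier_mat n n"
    and UU: "transpose_mat U * U = 1\<^sub>m n" and diag: "transpose_mat U * A * U = mat_diag n \<mu>"
    and x: "x \<in> carrier_vec n"
  defines "z \<equiv> transpose_mat U *\<^sub>v x"
  shows "x \<bullet> x = (\<Sum>i<n. (z $ i)\<^sup>2)"
    and "x \<bullet> (A *\<^sub>v x) = (\<Sum>i<n. \<mu> i * (z $ i)\<^sup>2)"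
    and "(A *\<^sub>v x) \<bullet> (A *\<^sub>v x) = (\<Sum>i<n. (\<mu> i)\<^sup>2 * (z $ i)\<^sup>2)"
proof -
  have z: "z \<in> carrier_vec n" unfolding z_def using U x by simp
  have Ax: "A *\<^sub>v x \<in> carrier_vec n" using A x by simp
  have UAx: "transpose_mat U *\<^sub>v (A *\<^sub>v x) = vec n (\<lambda>i. \<mu> i * z $ i)"
    unfolding z_def by (rule orthogonal_diag_coordinates[OF A U UU diag x])
  show "x \<bullet> x = (\<Sum>i<n. (z $ i)\<^sup>2)"
    using orthogonal_scalar_prod[OF U UU x x] z unfolding z_def[symmetric]
    by (simp add: scalar_prod_sum power2_eq_square)
  show "x \<bullet> (A *\<^sub>v x) = (\<Sum>i<n. \<mu> i * (z $ i)\<^sup>2)"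
    using orthogonal_scalar_prod[OF U UU x Ax] z unfolding UAx z_def[symmetric]
    by (simp add: scalar_prod_sum power2_eq_square mult_ac)
  show "(A *\<^sub>v x) \<bullet> (A *\<^sub>v x) = (\<Sum>i<n. (\<mu> i)\<^sup>2 * (z $ i)\<^sup>2)"
    using orthogonal_scalar_prod[OF U UU Ax Ax] unfolding UAx
    by (simp add: scalar_prod_sum power2_eq_square mult_ac)
qed

section \<open>Spectral bounds for \<open>(n, d, \<lambda>)\<close> graphs\<close>

definition indicator_vec :: "nat \<Rightarrow> nat set \<Rightarrow> real vec" where
  "indicator_vec n S = vec n (\<lambda>i. if i \<in> S then 1 else 0)"

lemma indicator_vec_carrier [simp]: "indicator_vec n S \<in> carrier_vec n"
  unfolding indicator_vec_def by simp

lemma scalar_prod_indicator_vec: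
  assumes "x \<in> carrier_vec n" "S \<subseteq> {0..<n}"
  shows "x \<bullet> indicator_vec n S = (\<Sum>i\<in>S. x $ i)"
proof -
  have "x \<bullet> indicator_vec n S = (\<Sum>i\<in>{0..<n}. if i \<in> S then x $ i else 0)"
    using assms(1) unfolding indicator_vec_def scalar_prod_def by (intro sum.cong) auto
  also have "\<dots> = (\<Sum>i\<in>S. x $ i)"
    using assms(2) by (simp add: sum.If_cases Int_absorb1)
  finally show ?thesis .
qed

lemma finite_nbhd [simp]: "finite (nbhd n E v)"
  unfolding nbhd_def by simp

lemma adj_mat_carrier [simp]: "adj_mat n E \<in> carrier_mat n n"
  and dim_adj_mat [simp]: "dim_row (adj_mat n E) = n" "dim_col (adj_mat n E) = n"
  unfolding adj_mat_def by simp_all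

lemma adj_mat_symmetric:
  assumes "simple_graph n E"
  shows "transpose_mat (adj_mat n E) = adj_mat n E"
  using assms unfolding simple_graph_def adj_mat_def by (intro eq_matI) auto

lemma adj_mat_mult_indicator_vec:
  assumes "u < n"
  shows "(adj_mat n E *\<^sub>v indicator_vec n S) $ u = real (card (nbhd n E u \<inter> S))"
proof -
  have "(adj_mat n E *\<^sub>v indicator_vec n S) $ u
      = (\<Sum>j\<in>{0..<n}. if j \<in> nbhd n E u \<inter> S then 1 else 0)"
    using assms unfolding adj_mat_def indicator_vec_def nbhd_def
    by (auto simp: scalar_prod_def intro!: sum.cong)
  also have "\<dots> = real (card (nbhd n E u \<inter> S))"
    by (simp add: sum.If_cases Int_absorb1 nbhd_def) (intro arg_cong[where f = card]; auto)
  finally show ?thesis .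
qed

lemma regular_adj_mat_eigenvector:
  assumes "regular n E d"
  shows "adj_mat n E *\<^sub>v indicator_vec n {0..<n} = real d \<cdot>\<^sub>v indicator_vec n {0..<n}"
proof (rule eq_vecI)
  fix u assume "u < dim_vec (real d \<cdot>\<^sub>v indicator_vec n {0..<n})"
  then have u: "u < n" by (simp add: indicator_vec_def)
  have "nbhd n E u \<inter> {0..<n} = nbhd n E u" unfolding nbhd_def by auto
  then show "(adj_mat n E *\<^sub>v indicator_vec n {0..<n}) $ u = (real d \<cdot>\<^sub>v indicator_vec n {0..<n}) $ u"
    using adj_mat_mult_indicator_vec[OF u, of E "{0..<n}"] assms u
    by (simp add: regular_def indicator_vec_def)
qed (simp add: adj_mat_def indicator_vec_def)

lemma ndl_proots_char_poly:
  assumes G: "ndl_graph n E d lam" and "lam < real d" and "0 < n"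
  obtains M where "proots (char_poly (adj_mat n E)) = add_mset (real d) M" "\<forall>x\<in>#M. \<bar>x\<bar> \<le> lam"
proof -
  define A where "A = adj_mat n E"
  define L where "L = adj_eigs n E"
  have A: "A \<in> carrier_mat n n" unfolding A_def by simp
  have reg: "regular n E d" and bound: "\<And>i. 1 \<le> i \<Longrightarrow> i < length L \<Longrightarrow> \<bar>L ! i\<bar> \<le> lam"
    using G unfolding ndl_graph_def L_def by auto
  have L: "mset L = proots (char_poly A)"
    unfolding L_def adj_eigs_def A_def by simp
  have "indicator_vec n {0..<n} $ 0 \<noteq> 0\<^sub>v n $ 0" using \<open>0 < n\<close> by (simp add: indicator_vec_def)
  then have "eigenvector A (indicator_vec n {0..<n}) (real d)"
    unfolding eigenvector_def A_def using regular_adj_mat_eigenvector[OF reg] by force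
  then have "poly (char_poly A) (real d) = 0"
    using eigenvalue_root_char_poly[OF A] unfolding eigenvalue_def by blast
  moreover have "char_poly A \<noteq> 0" using degree_monic_char_poly[OF A] by auto
  ultimately have "real d \<in># proots (char_poly A)" by simp
  then have "real d \<in> set L" unfolding L[symmetric] by simp
  then obtain a L' where aL': "L = a # L'" by (cases L) auto
  have L': "\<forall>x\<in>set L'. \<bar>x\<bar> \<le> lam"
    using bound[of "Suc _"] unfolding aL' by (auto simp: in_set_conv_nth)
  with \<open>real d \<in> set L\<close> \<open>lam < real d\<close> have "a = real d" unfolding aL' by force
  then show ?thesis using that[of "mset L'"] L L' unfolding aL' A_def by simp
qed

lemma ndl_orthogonal_eigenbasis:
  assumes G: "ndl_graph n E d lam" and "lam < real d" and "0 < n"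
  obtains U \<mu> i0 where "U \<in> carrier_mat n n" "transpose_mat U * U = 1\<^sub>m n"
    "transpose_mat U * adj_mat n E * U = mat_diag n \<mu>"
    "i0 < n" "\<mu> i0 = real d" "\<And>i. i < n \<Longrightarrow> i \<noteq> i0 \<Longrightarrow> \<bar>\<mu> i\<bar> \<le> lam"
proof -
  have simple: "simple_graph n E" using G unfolding ndl_graph_def by simp
  obtain U \<mu> where U: "U \<in> carrier_mat n n" "transpose_mat U * U = 1\<^sub>m n"
    and diag: "transpose_mat U * adj_mat n E * U = mat_diag n \<mu>"
    using real_symmetric_orthogonal_diagonalization[OF adj_mat_carrier adj_mat_symmetric[OF simple]] .
  obtain M where M: "mset (map \<mu> [0..<n]) = add_mset (real d) M" and Mb: "\<forall>x\<in>#M. \<bar>x\<bar> \<le> lam"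
    using ndl_proots_char_poly[OF assms] orthogonal_diag_proots_char_poly[OF adj_mat_carrier U diag] by metis
  then have "real d \<in> \<mu> ` {0..<n}" by (metis image_set set_mset_mset set_upt union_single_eq_member)
  then obtain i0 where i0: "i0 < n" "\<mu> i0 = real d" by auto
  have "mset [0..<n] = add_mset i0 (mset (remove1 i0 [0..<n]))"
    using i0 by (simp add: insert_DiffM mset_remove1)
  then have "mset (map \<mu> [0..<n]) = add_mset (\<mu> i0) (mset (map \<mu> (remove1 i0 [0..<n])))"
    by (metis image_mset_add_mset mset_map)
  then have M': "M = mset (map \<mu> (remove1 i0 [0..<n]))" using M i0 by simp
  have "\<bar>\<mu> i\<bar> \<le> lam" if "i < n" "i \<noteq> i0" for i
  proof -
    have "\<mu> i \<in> set (map \<mu> (remove1 i0 [0..<n]))" using that by (simp add: set_remove1_eq)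
    then show ?thesis using Mb M' by (metis set_mset_mset)
  qed
  with U diag i0 show ?thesis using that by blast
qed

lemma sum_eigenvalue_weighted_squares_bounds:
  fixes \<mu> z :: "nat \<Rightarrow> real"
  assumes i0: "i0 < n" and bound: "\<And>i. i < n \<Longrightarrow> i \<noteq> i0 \<Longrightarrow> \<bar>\<mu> i\<bar> \<le> lam"
  defines "rest \<equiv> (\<Sum>i<n. (z i)\<^sup>2) - (z i0)\<^sup>2"
  shows "\<mu> i0 * (z i0)\<^sup>2 - lam * rest \<le> (\<Sum>i<n. \<mu> i * (z i)\<^sup>2)"
    and "(\<Sum>i<n. (\<mu> i)\<^sup>2 * (z i)\<^sup>2) \<le> (\<mu> i0)\<^sup>2 * (z i0)\<^sup>2 + lam\<^sup>2 * rest"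
proof -
  have i0': "i0 \<in> {..<n}" using i0 by simp
  have split: "(\<Sum>i<n. f i) = f i0 + (\<Sum>i\<in>{..<n} - {i0}. f i)" for f :: "nat \<Rightarrow> real"
    using sum.remove[OF _ i0'] by blast
  have rest: "rest = (\<Sum>i\<in>{..<n} - {i0}. (z i)\<^sup>2)"
    unfolding rest_def split[of "\<lambda>i. (z i)\<^sup>2"] by simp
  have bound': "- lam \<le> \<mu> i" "(\<mu> i)\<^sup>2 \<le> lam\<^sup>2" if "i \<in> {..<n} - {i0}" for i
    using bound[of i] that by (auto simp: abs_le_iff abs_le_square_iff[symmetric])
  have "(\<Sum>i\<in>{..<n} - {i0}. - lam * (z i)\<^sup>2) \<le> (\<Sum>i\<in>{..<n} - {i0}. \<mu> i * (z i)\<^sup>2)"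
    using bound' by (intro sum_mono mult_right_mono) auto
  then show "\<mu> i0 * (z i0)\<^sup>2 - lam * rest \<le> (\<Sum>i<n. \<mu> i * (z i)\<^sup>2)"
    unfolding rest split[of "\<lambda>i. \<mu> i * (z i)\<^sup>2"] by (simp add: sum_distrib_left sum_negf)
  have "(\<Sum>i\<in>{..<n} - {i0}. (\<mu> i)\<^sup>2 * (z i)\<^sup>2) \<le> (\<Sum>i\<in>{..<n} - {i0}. lam\<^sup>2 * (z i)\<^sup>2)"
    using bound' by (intro sum_mono mult_right_mono) auto
  then show "(\<Sum>i<n. (\<mu> i)\<^sup>2 * (z i)\<^sup>2) \<le> (\<mu> i0)\<^sup>2 * (z i0)\<^sup>2 + lam\<^sup>2 * rest"
    unfolding rest split[of "\<lambda>i. (\<mu> i)\<^sup>2 * (z i)\<^sup>2"] by (simp add: sum_distrib_left)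
qed

lemma ndl_quadratic_form_bounds:
  assumes G: "ndl_graph n E d lam" and "lam < real d" and "0 < n" and x: "x \<in> carrier_vec n"
  defines "A \<equiv> adj_mat n E" and "p \<equiv> (x \<bullet> indicator_vec n {0..<n})\<^sup>2 / real n"
  shows "real d * p - lam * (x \<bullet> x - p) \<le> x \<bullet> (A *\<^sub>v x)"
    and "(A *\<^sub>v x) \<bullet> (A *\<^sub>v x) \<le> (real d)\<^sup>2 * p + lam\<^sup>2 * (x \<bullet> x - p)"
proof -
  have A: "A \<in> carrier_mat n n" unfolding A_def by simp
  obtain U \<mu> i0 where U: "U \<in> carrier_mat n n" "transpose_mat U * U = 1\<^sub>m n"
    and diag: "transpose_mat U * A * U = mat_diag n \<mu>"
    and i0: "i0 < n" "\<mu> i0 = real d" and bound: "\<And>i. i < n \<Longrightarrow> i \<noteq> i0 \<Longrightarrow> \<bar>\<mu> i\<bar> \<le> lam"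
    using ndl_orthogonal_eigenbasis[OF G \<open>lam < real d\<close> \<open>0 < n\<close>] unfolding A_def by metis
  define one where "one = indicator_vec n {0..<n}"
  define z where "z = transpose_mat U *\<^sub>v x"
  define w where "w = transpose_mat U *\<^sub>v one"
  have one: "one \<in> carrier_vec n" unfolding one_def by simp
  have reg: "regular n E d" using G unfolding ndl_graph_def by simp
  have w0: "w $ i = 0" if "i < n" "i \<noteq> i0" for i
    using orthogonal_diag_eigenvector_coordinates[OF A U diag one, of "real d" i] bound[OF that]
      regular_adj_mat_eigenvector[OF reg] \<open>lam < real d\<close> that
    unfolding w_def one_def A_def by force
  have "real n = one \<bullet> one"
    unfolding one_def using scalar_prod_indicator_vec[of _ n "{0..<n}"] by (simp add: indicator_vec_def)
  also have "\<dots> = (w $ i0)\<^sup>2"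
    using orthogonal_scalar_prod_single_coordinate[OF U one one _ i0(1)] w0
    unfolding w_def by (simp add: power2_eq_square)
  finally have "(w $ i0)\<^sup>2 = real n" by simp
  moreover have "x \<bullet> one = z $ i0 * w $ i0"
    using orthogonal_scalar_prod_single_coordinate[OF U x one _ i0(1)] w0 unfolding z_def w_def by simp
  ultimately have p: "p = (z $ i0)\<^sup>2"
    unfolding p_def one_def[symmetric] using \<open>0 < n\<close> by (simp add: power_mult_distrib)
  show "real d * p - lam * (x \<bullet> x - p) \<le> x \<bullet> (A *\<^sub>v x)"
    and "(A *\<^sub>v x) \<bullet> (A *\<^sub>v x) \<le> (real d)\<^sup>2 * p + lam\<^sup>2 * (x \<bullet> x - p)"
    using sum_eigenvalue_weighted_squares_bounds[where \<mu> = \<mu> and z = "\<lambda>i. z $ i", OF i0(1) bound] i0(2)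
    unfolding p orthogonal_diag_quadratic_forms[OF A U diag x, folded z_def] by simp_all
qed

section \<open>Types of vertices\<close>

lemma ndl_type_moment_bounds:
  assumes G: "ndl_graph n E d lam" and "lam < real d" and "0 < n" and W: "W \<subseteq> {0..<n}"
  defines "w \<equiv> real (card W)"
  shows "real d * (w\<^sup>2 / real n) - lam * (w - w\<^sup>2 / real n) \<le> (\<Sum>u\<in>W. real (card (nbhd n E u \<inter> W)))"
    and "(\<Sum>u<n. (real (card (nbhd n E u \<inter> W)))\<^sup>2) \<le> (real d)\<^sup>2 * (w\<^sup>2 / real n) + lam\<^sup>2 * (w - w\<^sup>2 / real n)"
proof -
  define f where "f = indicator_vec n W"
  define A where "A = adj_mat n E"
  have f: "f \<in> carrier_vec n" unfolding f_def by simp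
  have Afc: "A *\<^sub>v f \<in> carrier_vec n" unfolding A_def using mult_mat_vec_carrier[OF adj_mat_carrier f] .
  have Af: "(A *\<^sub>v f) $ u = real (card (nbhd n E u \<inter> W))" if "u < n" for u
    unfolding A_def f_def by (rule adj_mat_mult_indicator_vec[OF that])
  have "x \<bullet> f = w" if "x \<in> {indicator_vec n {0..<n}, f}" for x
  proof -
    have "x \<bullet> f = (\<Sum>i\<in>W. x $ i)" using scalar_prod_indicator_vec[OF _ W, of x] that f_def by auto
    also have "\<dots> = w" unfolding w_def using that W by (auto simp: f_def indicator_vec_def subset_iff)
    finally show ?thesis .
  qed
  then have "f \<bullet> indicator_vec n {0..<n} = w" "f \<bullet> f = w"
    using comm_scalar_prod[OF f indicator_vec_carrier] by auto
  moreover have "f \<bullet> (A *\<^sub>v f) = (\<Sum>u\<in>W. real (card (nbhd n E u \<inter> W)))"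
    using Af W scalar_prod_indicator_vec[OF Afc W] comm_scalar_prod[OF f Afc]
    unfolding f_def[symmetric] by (auto intro!: sum.cong)
  moreover have "(A *\<^sub>v f) \<bullet> (A *\<^sub>v f) = (\<Sum>u<n. (real (card (nbhd n E u \<inter> W)))\<^sup>2)"
    using Af Afc by (simp add: scalar_prod_sum power2_eq_square)
  ultimately show "real d * (w\<^sup>2 / real n) - lam * (w - w\<^sup>2 / real n) \<le> (\<Sum>u\<in>W. real (card (nbhd n E u \<inter> W)))"
    and "(\<Sum>u<n. (real (card (nbhd n E u \<inter> W)))\<^sup>2) \<le> (real d)\<^sup>2 * (w\<^sup>2 / real n) + lam\<^sup>2 * (w - w\<^sup>2 / real n)"
    using ndl_quadratic_form_bounds[OF G \<open>lam < real d\<close> \<open>0 < n\<close> f] unfolding A_def by simp_all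
qed

lemma connected_graph_edge_across:
  assumes "connected_graph n E" "a \<in> S" "b \<notin> S" "a < n" "b < n"
  obtains x y where "E x y" "x \<in> S" "y \<notin> S"
proof -
  have "(a, b) \<in> {(x, y). E x y}\<^sup>*" using assms unfolding connected_graph_def by blast
  then have "\<exists>x y. E x y \<and> x \<in> S \<and> y \<notin> S" using assms(2,3)
    by (induction rule: rtrancl_induct) auto
  then show ?thesis using that by blast
qed

lemma card_nbhd_inter_eq_sum:
  assumes "S \<subseteq> {0..<n}"
  shows "card (nbhd n E u \<inter> S) = (\<Sum>v\<in>S. if E u v then 1 else 0)"
proof -
  have "nbhd n E u \<inter> S = {v \<in> S. E u v}" using assms unfolding nbhd_def by auto
  then show ?thesis using finite_subset[OF assms] by (simp add: sum.If_cases Int_def)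
qed

lemma sum_card_nbhd_inter_swap:
  assumes "simple_graph n E" "B \<subseteq> {0..<n}" "W \<subseteq> {0..<n}"
  shows "(\<Sum>u\<in>B. card (nbhd n E u \<inter> W)) = (\<Sum>v\<in>W. card (nbhd n E v \<inter> B))"
proof -
  have sym: "E u v = E v u" for u v using assms(1) unfolding simple_graph_def by blast
  have "(\<Sum>u\<in>B. card (nbhd n E u \<inter> W)) = (\<Sum>u\<in>B. \<Sum>v\<in>W. if E u v then 1 else 0)"
    using card_nbhd_inter_eq_sum[OF assms(3)] by simp
  also have "\<dots> = (\<Sum>v\<in>W. \<Sum>u\<in>B. if E v u then 1 else 0)"
    by (subst sum.swap) (simp add: sym)
  also have "\<dots> = (\<Sum>v\<in>W. card (nbhd n E v \<inter> B))"
    using card_nbhd_inter_eq_sum[OF assms(2)] by simp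
  finally show ?thesis .
qed

lemma regular_card_nbhd_partition:
  assumes "regular n E d" "v < n" "B \<inter> W = {}" "B \<union> W = {0..<n}"
  shows "card (nbhd n E v \<inter> B) + card (nbhd n E v \<inter> W) = d"
proof -
  have "nbhd n E v = (nbhd n E v \<inter> B) \<union> (nbhd n E v \<inter> W)"
    using assms(4) unfolding nbhd_def by auto
  then have "card (nbhd n E v) = card (nbhd n E v \<inter> B) + card (nbhd n E v \<inter> W)"
    using assms(3) by (metis card_Un_disjoint finite_Int finite_nbhd inf_assoc inf_bot_right inf_commute)
  then show ?thesis using assms(1,2) unfolding regular_def by simp
qed

lemma sum_squares_ge_square_sum_div_card:
  fixes f :: "'a \<Rightarrow> real"
  assumes "finite S"
  shows "(\<Sum>x\<in>S. f x)\<^sup>2 / real (card S) \<le> (\<Sum>x\<in>S. (f x)\<^sup>2)"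
proof (cases "S = {}")
  case False
  define c where "c = (\<Sum>x\<in>S. f x) / real (card S)"
  have "0 \<le> (\<Sum>x\<in>S. (f x - c)\<^sup>2)" by (rule sum_nonneg) simp
  also have "\<dots> = (\<Sum>x\<in>S. (f x)\<^sup>2) - 2 * c * (\<Sum>x\<in>S. f x) + real (card S) * c\<^sup>2"
    by (simp add: power2_diff sum.distrib sum_subtractf sum_distrib_left sum_distrib_right mult_ac)
  also have "\<dots> = (\<Sum>x\<in>S. (f x)\<^sup>2) - (\<Sum>x\<in>S. f x)\<^sup>2 / real (card S)"
    using assms False unfolding c_def by (simp add: field_simps power2_eq_square)
  finally show ?thesis by simp
qed simp

text \<open>In the application \<open>x = |W| / n\<close> and \<open>y\<close> is the average type of a vertex of \<open>W\<close>.\<close>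

lemma type_quadratic_bound:
  fixes d lam x y :: real
  assumes "0 \<le> lam" "2 * lam < d" "0 < x" "x \<le> 1"
    and "d * x - lam * (1 - x) \<le> y" "y \<le> d"
  defines "k \<equiv> (d + lam) * x + lam"
  shows "(d - y) * (y + d - k) \<le> (d\<^sup>2 - lam\<^sup>2) * (1 - x)"
proof (cases "k \<le> 4 * lam")
  case True
  text \<open>Bound the left-hand side by its maximum over all \<open>y\<close>.\<close>
  have "4 * ((d - y) * (y + d - k)) \<le> (2 * d - k)\<^sup>2"
    using sum_squares_ge_zero[of "(d - y) - (y + d - k)" 0] by (simp add: power2_eq_square algebra_simps)
  moreover have "k\<^sup>2 \<le> 4 * lam * k" using True assms unfolding k_def by (simp add: power2_eq_square mult_right_mono)
  moreover have "4 * lam * k \<le> 4 * lam * (d * (1 + x) - lam * (1 - x))"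
    using assms unfolding k_def by (intro mult_left_mono) (auto simp: algebra_simps)
  moreover have "(2 * d - k)\<^sup>2 - 4 * ((d\<^sup>2 - lam\<^sup>2) * (1 - x)) = k\<^sup>2 - 4 * lam * (d * (1 + x) - lam * (1 - x))"
    unfolding k_def by (simp add: algebra_simps power2_eq_square)
  ultimately show ?thesis by linarith
next
  case False
  text \<open>The left-hand side is concave in \<open>y\<close> with vertex \<open>k / 2 < k - 2 lam\<close>, the least admissible \<open>y\<close>.\<close>
  define y0 where "y0 = k - 2 * lam"
  have "(d - y) * (y + d - k) - (d - y0) * (y0 + d - k) = (y - y0) * (k - y - y0)"
    by (simp add: algebra_simps)
  moreover have "(y - y0) * (k - y - y0) \<le> 0"
    using False assms unfolding k_def y0_def by (intro mult_nonneg_nonpos) (auto simp: algebra_simps)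
  moreover have "(d - y0) * (y0 + d - k) = (d + lam) * (1 - x) * (d - 2 * lam)"
    unfolding k_def y0_def by (simp add: algebra_simps)
  moreover have "(d + lam) * (1 - x) * (d - 2 * lam) \<le> (d + lam) * (1 - x) * (d - lam)"
    using assms by (intro mult_left_mono) auto
  ultimately show ?thesis by (simp add: algebra_simps power2_eq_square)
qed

lemma type_moments_inconsistent:
  fixes d lam n w Q R :: real
  assumes "0 \<le> lam" "2 * lam < d" "0 < w" "w \<le> n"
    and Qlow: "d * (w\<^sup>2 / n) - lam * (w - w\<^sup>2 / n) \<le> Q" and Qup: "Q \<le> d * w"
    and Rup: "R \<le> d\<^sup>2 * (w\<^sup>2 / n) + lam\<^sup>2 * (w - w\<^sup>2 / n)"
    and Rlow: "((d + lam) * w / n + lam) * (d * w - Q) + Q\<^sup>2 / w < R"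
  shows False
proof -
  define x where "x = w / n"
  define y where "y = Q / w"
  have "0 < x" "x \<le> 1" unfolding x_def using assms(3,4) by auto
  have "(d * x - lam * (1 - x)) * w = d * (w\<^sup>2 / n) - lam * (w - w\<^sup>2 / n)"
    unfolding x_def by (simp add: algebra_simps power2_eq_square)
  then have "d * x - lam * (1 - x) \<le> y" unfolding y_def using Qlow \<open>0 < w\<close> by (simp add: pos_le_divide_eq)
  moreover have "y \<le> d" unfolding y_def using Qup \<open>0 < w\<close> by (simp add: pos_divide_le_eq)
  ultimately have "(d - y) * (y + d - ((d + lam) * x + lam)) * w \<le> (d\<^sup>2 - lam\<^sup>2) * (1 - x) * w"
    using type_quadratic_bound[OF assms(1,2) \<open>0 < x\<close> \<open>x \<le> 1\<close>] \<open>0 < w\<close> by (simp add: mult_right_mono)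
  moreover have "(d - y) * (y + d - ((d + lam) * x + lam)) * w
      = (d\<^sup>2 * (w\<^sup>2 / n) + lam\<^sup>2 * (w - w\<^sup>2 / n)) - (((d + lam) * w / n + lam) * (d * w - Q) + Q\<^sup>2 / w)
        + (d\<^sup>2 - lam\<^sup>2) * (1 - x) * w"
    unfolding x_def y_def using \<open>0 < w\<close> by (simp add: field_simps power2_eq_square)
  ultimately show False using Rup Rlow by linarith
qed

lemma connected_partition_crossing_vertex:
  assumes "simple_graph n E" "connected_graph n E" "B \<inter> W = {}" "B \<union> W = {0..<n}" "B \<noteq> {}" "W \<noteq> {}"
  obtains x where "x \<in> B" "0 < card (nbhd n E x \<inter> W)"
proof -
  obtain b y0 where "b \<in> B" "y0 \<in> W" using assms(5,6) by blast
  then have "y0 \<notin> B" "b < n" "y0 < n" using assms(3,4) by auto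
  obtain x y where xy: "E x y" "x \<in> B" "y \<notin> B"
    by (rule connected_graph_edge_across[OF assms(2) \<open>b \<in> B\<close> \<open>y0 \<notin> B\<close> \<open>b < n\<close> \<open>y0 < n\<close>])
  have "y < n" using assms(1) xy(1) unfolding simple_graph_def by blast
  then have "y \<in> nbhd n E x \<inter> W" using assms(4) xy unfolding nbhd_def by auto
  then have "0 < card (nbhd n E x \<inter> W)" by (metis card_gt_0_iff empty_iff finite_Int finite_nbhd)
  with xy(2) show ?thesis using that by blast
qed

lemma regular_partition_sum_types:
  assumes "simple_graph n E" "regular n E d" "B \<inter> W = {}" "B \<union> W = {0..<n}"
  shows "(\<Sum>u\<in>B. real (card (nbhd n E u \<inter> W)))
    = real d * real (card W) - (\<Sum>v\<in>W. real (card (nbhd n E v \<inter> W)))"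
proof -
  have BW: "B \<subseteq> {0..<n}" "W \<subseteq> {0..<n}" using assms(4) by auto
  have "(\<Sum>u\<in>B. real (card (nbhd n E u \<inter> W))) = (\<Sum>v\<in>W. real (card (nbhd n E v \<inter> B)))"
    using sum_card_nbhd_inter_swap[OF assms(1) BW] by (metis of_nat_sum)
  also have "\<dots> = (\<Sum>v\<in>W. real d - real (card (nbhd n E v \<inter> W)))"
  proof (rule sum.cong[OF refl])
    fix v assume "v \<in> W"
    then have "card (nbhd n E v \<inter> B) + card (nbhd n E v \<inter> W) = d"
      using regular_card_nbhd_partition[OF assms(2) _ assms(3,4)] BW by auto
    then show "real (card (nbhd n E v \<inter> B)) = real d - real (card (nbhd n E v \<inter> W))"
      by (simp flip: of_nat_add)
  qed
  finally show ?thesis by (simp add: sum_subtractf mult.commute)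
qed

lemma sum_mult_less_sum_squares:
  fixes g :: "'a \<Rightarrow> real"
  assumes "finite B" and "\<And>u. u \<in> B \<Longrightarrow> 0 \<le> g u" and "\<And>u. u \<in> B \<Longrightarrow> 0 < g u \<Longrightarrow> k < g u"
    and "x \<in> B" "0 < g x"
  shows "k * (\<Sum>u\<in>B. g u) < (\<Sum>u\<in>B. (g u)\<^sup>2)"
  unfolding sum_distrib_left
proof (rule sum_strict_mono_ex1[OF assms(1)])
  show "\<forall>u\<in>B. k * g u \<le> (g u)\<^sup>2"
  proof
    fix u assume "u \<in> B"
    show "k * g u \<le> (g u)\<^sup>2"
    proof (cases "g u = 0")
      case False
      then have "k \<le> g u" using assms(2,3)[OF \<open>u \<in> B\<close>] by fastforce
      then show ?thesis unfolding power2_eq_square by (rule mult_right_mono) (use assms(2) \<open>u \<in> B\<close> in auto)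
    qed simp
  qed
  show "\<exists>u\<in>B. k * g u < (g u)\<^sup>2"
    using assms(3-5) by (intro bexI[of _ x]) (simp_all add: power2_eq_square)
qed

lemma type_threshold_gap:
  fixes d lam n w :: real
  assumes "0 \<le> d" "0 \<le> lam" "0 < n" "0 < w" and large: "lam / (d + lam) * n < w"
    and below: "(d + lam) * w / n + lam < d"
  shows "2 * lam < d"
proof -
  have "0 \<le> (d + lam) * w / n" using assms(1-4) by simp
  then have "0 < d + lam" using below \<open>0 \<le> lam\<close> by linarith
  then have "lam * n < w * (d + lam)" using large by (simp add: field_simps)
  then have "lam < (d + lam) * w / n" using \<open>0 < n\<close> by (simp add: field_simps)
  then show ?thesis using below by linarith
qed

lemma partition_type_second_moment_lower:
  assumes simple: "simple_graph n E" and reg: "regular n E d" and part: "B \<inter> W = {}" "B \<union> W = {0..<n}"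
    and high: "\<And>u. u \<in> B \<Longrightarrow> 0 < card (nbhd n E u \<inter> W) \<Longrightarrow> k < real (card (nbhd n E u \<inter> W))"
    and x: "x \<in> B" "0 < card (nbhd n E x \<inter> W)"
  defines "g u \<equiv> real (card (nbhd n E u \<inter> W))" and "w \<equiv> real (card W)"
  shows "k * (real d * w - (\<Sum>u\<in>W. g u)) + (\<Sum>u\<in>W. g u)\<^sup>2 / w < (\<Sum>u<n. (g u)\<^sup>2)"
proof -
  have "B \<subseteq> {0..<n}" "W \<subseteq> {0..<n}" using part(2) by auto
  then have fin: "finite B" "finite W" using finite_subset by auto
  have sumB: "(\<Sum>u\<in>B. g u) = real d * w - (\<Sum>u\<in>W. g u)"
    using regular_partition_sum_types[OF simple reg part] unfolding g_def w_def .
  have "(\<Sum>u<n. (g u)\<^sup>2) = (\<Sum>u\<in>B. (g u)\<^sup>2) + (\<Sum>u\<in>W. (g u)\<^sup>2)"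
    using sum.union_disjoint[OF fin part(1)] part(2) by (simp add: atLeast0LessThan)
  moreover have "(\<Sum>u\<in>W. g u)\<^sup>2 / w \<le> (\<Sum>u\<in>W. (g u)\<^sup>2)"
    using sum_squares_ge_square_sum_div_card[OF fin(2)] unfolding w_def .
  moreover have "k * (real d * w - (\<Sum>u\<in>W. g u)) < (\<Sum>u\<in>B. (g u)\<^sup>2)"
    unfolding sumB[symmetric]
    by (rule sum_mult_less_sum_squares[OF fin(1)]) (use high x in \<open>auto simp: g_def\<close>)
  ultimately show ?thesis by linarith
qed

lemma ndl_partition_low_type_vertex:
  assumes G: "ndl_graph n E d lam" and conn: "connected_graph n E"
    and part: "B \<inter> W = {}" "B \<union> W = {0..<n}" and "B \<noteq> {}"
    and large: "lam / (real d + lam) * real n < real (card W)"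
  shows "\<exists>u\<in>B. 1 \<le> card (nbhd n E u \<inter> W) \<and>
           real (card (nbhd n E u \<inter> W)) \<le> (real d + lam) * real (card W) / real n + lam"
proof (rule ccontr)
  define g where "g u = real (card (nbhd n E u \<inter> W))" for u
  define w where "w = real (card W)"
  define k where "k = (real d + lam) * w / real n + lam"
  assume "\<not> ?thesis"
  then have high: "k < g u" if "u \<in> B" "0 < g u" for u
    using that unfolding g_def k_def w_def by fastforce
  have simple: "simple_graph n E" and reg: "regular n E d" and "0 \<le> lam"
    using G unfolding ndl_graph_def by auto
  have BW: "B \<subseteq> {0..<n}" "W \<subseteq> {0..<n}" using part by auto
  have "0 \<le> lam / (real d + lam) * real n" using \<open>0 \<le> lam\<close> by simp
  then have "0 < w" using large unfolding w_def by linarith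
  then obtain x where x: "x \<in> B" "0 < g x"
    using connected_partition_crossing_vertex[OF simple conn part \<open>B \<noteq> {}\<close>] unfolding g_def w_def by force
  have g_le: "g u \<le> real d" if "u < n" for u
    using card_mono[OF finite_nbhd, of "nbhd n E u \<inter> W"] reg that unfolding g_def regular_def by auto
  have "0 < n" "w \<le> real n" using BW x(1) card_mono[OF _ BW(2)] unfolding w_def by auto
  have "k < real d" using high[OF x] g_le[of x] BW x(1) by force
  then have "2 * lam < real d"
    using type_threshold_gap[where d = "real d" and n = "real n", OF _ \<open>0 \<le> lam\<close> _ \<open>0 < w\<close>] large \<open>0 < n\<close>
    unfolding k_def w_def by simp
  define Q where "Q = (\<Sum>u\<in>W. g u)"
  define R where "R = (\<Sum>u<n. (g u)\<^sup>2)"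
  have Qlow: "real d * (w\<^sup>2 / real n) - lam * (w - w\<^sup>2 / real n) \<le> Q"
    and Rup: "R \<le> (real d)\<^sup>2 * (w\<^sup>2 / real n) + lam\<^sup>2 * (w - w\<^sup>2 / real n)"
    using ndl_type_moment_bounds[OF G _ \<open>0 < n\<close> BW(2)] \<open>2 * lam < real d\<close> \<open>0 \<le> lam\<close>
    unfolding Q_def R_def g_def w_def by auto
  have "Q \<le> (\<Sum>u\<in>W. real d)" unfolding Q_def using g_le BW(2) by (intro sum_mono) auto
  then have "Q \<le> real d * w" unfolding w_def by (simp add: mult.commute)
  moreover have "k * (real d * w - Q) + Q\<^sup>2 / w < R"
    using partition_type_second_moment_lower[OF simple reg part, of k x] high x
    unfolding Q_def R_def g_def w_def by simp
  ultimately show False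
    using type_moments_inconsistent[OF \<open>0 \<le> lam\<close> \<open>2 * lam < real d\<close> \<open>0 < w\<close> \<open>w \<le> real n\<close> Qlow _ Rup]
    unfolding k_def by blast
qed

theorem mainTheorem4:
  fixes n d t :: nat and E :: "nat \<Rightarrow> nat \<Rightarrow> bool" and lam :: real
    and vs :: "nat \<Rightarrow> nat" and B W :: "nat set"
  assumes "ndl_graph n E d lam"
    and "connected_graph n E"
    and "t \<ge> 2"
    and "\<forall>i\<in>{1..t-1}. vs i < n"
    and "B = (\<Union>i\<in>{1..t-1}. cl_nbhd n E (vs i))"
    and "W = {0..<n} - B"
    and "real (card W) > lam / (real d + lam) * real n"
  shows "\<exists>u\<in>B. 1 \<le> card (nbhd n E u \<inter> W) \<and>
           real (card (nbhd n E u \<inter> W)) \<le> (real d + lam) * real (card W) / real n + lam"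
proof -
  have "B \<subseteq> {0..<n}"
    using assms(4,5) unfolding cl_nbhd_def nbhd_def by auto
  then have "B \<inter> W = {}" "B \<union> W = {0..<n}" using assms(6) by auto
  moreover have "vs 1 \<in> B" using assms(3,5) unfolding cl_nbhd_def by auto
  ultimately show ?thesis
    using ndl_partition_low_type_vertex[OF assms(1,2) _ _ _ assms(7)] by blast
qed

end
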